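(* Let $\tau,\alpha,b>0$ satisfy $\alpha b>\tau$, let $B>0$ satisfy $\frac1b<B<\frac\alpha\tau$, and let $0<\gamma_\star<\gamma^\star$. Then there exist $\delta_1>0$ and $k_1,k_2>0$, depending only on $\Omega,\tau,\alpha,b,B,\gamma_\star,\gamma^\star$, such that whenever $\delta\in(0,\delta_1]$, $D>0$, the data are as in the context, $\varepsilon\in(0,1)$ and $T\in(0,T_{max,\varepsilon})$ are such that $\gamma_\star\le\gamma_\varepsilon(\Theta_\varepsilon)\le\gamma^\star$ in $\Omega\times(0,T)$, then for all $t\in(0,T)$, $$k_1\Big(\int_\Omega w_{\varepsilon x}^2+\int_\Omega v_{\varepsilon xx}^2+\int_\Omega u_{\varepsilon xx}^2+\varepsilon\int_\Omega u_{\varepsilon xxx}^2\Big)\le y_\varepsilon^{(B,\delta)}(t)\le k_2\Big(\int_\Omega w_{\varepsilon x}^2+\int_\Omega v_{\varepsilon xx}^2+\int_\Omega u_{\varepsilon xx}^2+\varepsilon\int_\Omega u_{\varepsilon xxx}^2\Big).$$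
   Context: Let $\Omega\subset\mathbb R$ be a bounded open interval and $D,\tau,\alpha,b>0$. Let $(\gamma_\varepsilon)_{\varepsilon\in(0,1)}\subset C^\infty([0,\infty);[0,\infty))$ and let $(u_{0\varepsilon}),(v_{0\varepsilon}),(w_{0\varepsilon}),(\Theta_{0\varepsilon})_{\varepsilon\in(0,1)}\subset C^\infty(\overline\Omega)$ be such that for each $\varepsilon$ the derivatives $u_{0\varepsilon x},v_{0\varepsilon x},w_{0\varepsilon x},\Theta_{0\varepsilon x}$ are compactly supported in $\Omega$, $\int_\Omega u_{0\varepsilon}=\int_\Omega v_{0\varepsilon}=\int_\Omega w_{0\varepsilon}=0$, and $\Theta_{0\varepsilon}\ge0$. For $\varepsilon\in(0,1)$ consider the regularized problem $$\tau w_{\varepsilon t}=\varepsilon w_{\varepsilon xx}+b(\gamma_\varepsilon(\Theta_\varepsilon)v_{\varepsilon x})_x+(\gamma_\varepsilon(\Theta_\varepsilon)u_{\varepsilon x})_x-\alpha w_\varepsilon,\quad v_{\varepsilon t}=\varepsilon v_{\varepsilon xx}+w_\varepsilon,\quad u_{\varepsilon t}=\varepsilon u_{\varepsilon xx}+v_\varepsilon,\quad \Theta_{\varepsilon t}=D\Theta_{\varepsilon xx}+b\gamma_\varepsilon(\Theta_\varepsilon)v_{\varepsilon x}^2$$ in $\Omega\times(0,\infty)$, with $w_{\varepsilon x}=v_{\varepsilon x}=u_{\varepsilon x}=\Theta_{\varepsilon x}=0$ on $\partial\Omega$ and initial values $w_{0\varepsilon},v_{0\varepsilon},u_{0\varepsilon},\Theta_{0\varepsilon}$.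 It is known that for each $\varepsilon$ there exist $T_{max,\varepsilon}\in(0,\infty]$ and a classical solution $(w_\varepsilon,v_\varepsilon,u_\varepsilon,\Theta_\varepsilon)$, each component in $C^{2,1}(\overline\Omega\times[0,T_{max,\varepsilon}))\cap C^\infty(\overline\Omega\times(0,T_{max,\varepsilon}))$, with $\Theta_\varepsilon\ge0$, $\int_\Omega w_\varepsilon=\int_\Omega v_\varepsilon=\int_\Omega u_\varepsilon=0$ for all times, and such that if $T_{max,\varepsilon}<\infty$ then $\limsup_{t\nearrow T_{max,\varepsilon}}\{\|w_\varepsilon\|_{L^\infty}+\|v_\varepsilon\|_{W^{1,2}}+\|u_\varepsilon\|_{W^{1,2}}+\|\Theta_\varepsilon\|_{L^\infty}\}=\infty$. Subscripts $x,t$ denote partial derivatives; $\int_\Omega$ integrates in $x$ at time $t$. For $B>0,\delta>0$ define, for $t\in[0,T_{max,\varepsilon})$ (with $\gamma_\varepsilon=\gamma_\varepsilon(\Theta_\varepsilon)$), $$y_\varepsilon^{(B,\delta)}(t):=\frac\tau2\int_\Omega w_{\varepsilon x}^2+\frac b2\int_\Omega\gamma_\varepsilon v_{\varepsilon xx}^2+\frac{B+b\delta}{2}\int_\Omega\gamma_\varepsilon u_{\varepsilon xx}^2+\frac{\alpha B-\tau\delta}{2}\int_\Omega v_{\varepsilon x}^2+\int_\Omega\gamma_\varepsilon u_{\varepsilon xx}v_{\varepsilon xx}+\varepsilon\int_\Omega\gamma_\varepsilon u_{\varepsilon xxx}^2$$ $$+\frac{(1+\tau)B\varepsilon}{2}\int_\Omega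 v_{\varepsilon xx}^2+\tau B\int_\Omega v_{\varepsilon x}w_{\varepsilon x}+\tau\delta\int_\Omega u_{\varepsilon x}w_{\varepsilon x}+\alpha\delta\int_\Omega u_{\varepsilon x}v_{\varepsilon x}.$$ *)

theory Defs
  imports "HOL-Analysis.Analysis" "HOL-Library.Extended_Real"
begin

text \<open>Omega is the bounded open interval {a<..<c} with a < c; its closure is {a..c}.\<close>

definition dwithin :: "real set \<Rightarrow> (real \<Rightarrow> real) \<Rightarrow> real \<Rightarrow> real" where
  "dwithin S g x = (THE d. (g has_real_derivative d) (at x within S))"

definition Cinf :: "real set \<Rightarrow> (real \<Rightarrow> real) \<Rightarrow> bool" where
  "Cinf S g \<longleftrightarrow> (\<exists>Dg :: nat \<Rightarrow> real \<Rightarrow> real. (\<forall>x\<in>S. Dg 0 x = g x) \<and>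
      (\<forall>k. \<forall>x\<in>S. (Dg k has_real_derivative Dg (Suc k) x) (at x within S)))"

definition px :: "real \<Rightarrow> real \<Rightarrow> (real \<Rightarrow> real \<Rightarrow> real) \<Rightarrow> real \<Rightarrow> real \<Rightarrow> real" where
  "px a c f x t = dwithin {a..c} (\<lambda>y. f y t) x"

definition pt :: "(real \<Rightarrow> real \<Rightarrow> real) \<Rightarrow> real \<Rightarrow> real \<Rightarrow> real" where
  "pt f x t = deriv (\<lambda>s. f x s) t"

definition init_ok :: "real \<Rightarrow> real \<Rightarrow> (real \<Rightarrow> real) \<Rightarrow> bool" where
  "init_ok a c f \<longleftrightarrow> Cinf {a..c} f \<and>
     (\<exists>a' c'. a < a' \<and> a' \<le> c' \<and> c' < c \<and> (\<forall>x\<in>{a..c} - {a'..c'}. dwithin {a..c} f x = 0))"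

text \<open>Regularity: C^{2,1} on closure(Omega) x [0,Tmax) and smooth on closure(Omega) x (0,Tmax).\<close>
definition sol_reg :: "real \<Rightarrow> real \<Rightarrow> ereal \<Rightarrow> (real \<Rightarrow> real \<Rightarrow> real) \<Rightarrow> bool" where
  "sol_reg a c Tm f \<longleftrightarrow>
     continuous_on ({a..c} \<times> {t. 0 \<le> t \<and> ereal t < Tm}) (\<lambda>(x,t). f x t) \<and>
     continuous_on ({a..c} \<times> {t. 0 \<le> t \<and> ereal t < Tm}) (\<lambda>(x,t). px a c f x t) \<and>
     continuous_on ({a..c} \<times> {t. 0 \<le> t \<and> ereal t < Tm}) (\<lambda>(x,t). px a c (px a c f) x t) \<and>
     (\<forall>x\<in>{a..c}. ((\<lambda>s. f x s) has_real_derivative dwithin {t. 0 \<le> t \<and> ereal t < Tm} (\<lambda>s. f x s) 0)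
         (at 0 within {t. 0 \<le> t \<and> ereal t < Tm})) \<and>
     continuous_on ({a..c} \<times> {t. 0 \<le> t \<and> ereal t < Tm})
        (\<lambda>(x,t). dwithin {t. 0 \<le> t \<and> ereal t < Tm} (\<lambda>s. f x s) t) \<and>
     (\<forall>t. 0 < t \<and> ereal t < Tm \<longrightarrow> Cinf {a..c} (\<lambda>x. f x t)) \<and>
     (\<forall>x\<in>{a..c}. Cinf {t. 0 < t \<and> ereal t < Tm} (\<lambda>s. f x s))"

text \<open>Classical solution of the regularized problem on closure(Omega) x [0,Tmax), with the
  stated properties (nonnegativity, mass zero, extensibility criterion).\<close>
definition is_solution ::
  "real \<Rightarrow> real \<Rightarrow> real \<Rightarrow> real \<Rightarrow> real \<Rightarrow> real \<Rightarrow> real \<Rightarrow> (real \<Rightarrow> real) \<Rightarrow>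
   (real \<Rightarrow> real) \<Rightarrow> (real \<Rightarrow> real) \<Rightarrow> (real \<Rightarrow> real) \<Rightarrow> (real \<Rightarrow> real) \<Rightarrow> ereal \<Rightarrow>
   (real \<Rightarrow> real \<Rightarrow> real) \<Rightarrow> (real \<Rightarrow> real \<Rightarrow> real) \<Rightarrow> (real \<Rightarrow> real \<Rightarrow> real) \<Rightarrow>
   (real \<Rightarrow> real \<Rightarrow> real) \<Rightarrow> bool" where
  "is_solution a c D \<tau> \<alpha> b \<epsilon> \<gamma> w0 v0 u0 \<Theta>0 Tm w v u \<Theta> \<longleftrightarrow>
     0 < Tm \<and>
     sol_reg a c Tm w \<and> sol_reg a c Tm v \<and> sol_reg a c Tm u \<and> sol_reg a c Tm \<Theta> \<and>
     (\<forall>x\<in>{a<..<c}. \<forall>t. 0 < t \<and> ereal t < Tm \<longrightarrow>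
        \<tau> * pt w x t = \<epsilon> * px a c (px a c w) x t
            + b * px a c (\<lambda>y s. \<gamma> (\<Theta> y s) * px a c v y s) x t
            + px a c (\<lambda>y s. \<gamma> (\<Theta> y s) * px a c u y s) x t - \<alpha> * w x t \<and>
        pt v x t = \<epsilon> * px a c (px a c v) x t + w x t \<and>
        pt u x t = \<epsilon> * px a c (px a c u) x t + v x t \<and>
        pt \<Theta> x t = D * px a c (px a c \<Theta>) x t + b * \<gamma> (\<Theta> x t) * (px a c v x t)\<^sup>2) \<and>
     (\<forall>t. 0 < t \<and> ereal t < Tm \<longrightarrow>
        (\<forall>x\<in>{a,c}. px a c w x t = 0 \<and> px a c v x t = 0 \<and> px a c u x t = 0 \<and> px a c \<Theta> x t = 0)) \<and>
     (\<forall>x\<in>{a..c}. w x 0 = w0 x \<and> v x 0 = v0 x \<and> u x 0 = u0 x \<and> \<Theta> x 0 = \<Theta>0 x) \<and>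
     (\<forall>x\<in>{a..c}. \<forall>t. 0 \<le> t \<and> ereal t < Tm \<longrightarrow> \<Theta> x t \<ge> 0) \<and>
     (\<forall>t. 0 \<le> t \<and> ereal t < Tm \<longrightarrow>
        integral {a..c} (\<lambda>x. w x t) = 0 \<and> integral {a..c} (\<lambda>x. v x t) = 0 \<and>
        integral {a..c} (\<lambda>x. u x t) = 0) \<and>
     (Tm < \<infinity> \<longrightarrow> (\<forall>M. \<forall>t0. 0 \<le> t0 \<and> ereal t0 < Tm \<longrightarrow> (\<exists>t. t0 < t \<and> ereal t < Tm \<and>
        M < (SUP x\<in>{a..c}. \<bar>w x t\<bar>)
            + sqrt (integral {a..c} (\<lambda>x. (v x t)\<^sup>2) + integral {a..c} (\<lambda>x. (px a c v x t)\<^sup>2))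
            + sqrt (integral {a..c} (\<lambda>x. (u x t)\<^sup>2) + integral {a..c} (\<lambda>x. (px a c u x t)\<^sup>2))
            + (SUP x\<in>{a..c}. \<bar>\<Theta> x t\<bar>))))"

definition yfun ::
  "real \<Rightarrow> real \<Rightarrow> real \<Rightarrow> real \<Rightarrow> real \<Rightarrow> real \<Rightarrow> real \<Rightarrow> real \<Rightarrow> (real \<Rightarrow> real) \<Rightarrow>
   (real \<Rightarrow> real \<Rightarrow> real) \<Rightarrow> (real \<Rightarrow> real \<Rightarrow> real) \<Rightarrow> (real \<Rightarrow> real \<Rightarrow> real) \<Rightarrow>
   (real \<Rightarrow> real \<Rightarrow> real) \<Rightarrow> real \<Rightarrow> real" where
  "yfun a c \<tau> \<alpha> b B \<delta> \<epsilon> \<gamma> w v u \<Theta> t =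
     \<tau>/2 * integral {a..c} (\<lambda>x. (px a c w x t)\<^sup>2)
   + b/2 * integral {a..c} (\<lambda>x. \<gamma> (\<Theta> x t) * (px a c (px a c v) x t)\<^sup>2)
   + (B + b*\<delta>)/2 * integral {a..c} (\<lambda>x. \<gamma> (\<Theta> x t) * (px a c (px a c u) x t)\<^sup>2)
   + (\<alpha>*B - \<tau>*\<delta>)/2 * integral {a..c} (\<lambda>x. (px a c v x t)\<^sup>2)
   + integral {a..c} (\<lambda>x. \<gamma> (\<Theta> x t) * px a c (px a c u) x t * px a c (px a c v) x t)
   + \<epsilon> * integral {a..c} (\<lambda>x. \<gamma> (\<Theta> x t) * (px a c (px a c (px a c u)) x t)\<^sup>2)
   + (1+\<tau>)*B*\<epsilon>/2 * integral {a..c} (\<lambda>x. (px a c (px a c v) x t)\<^sup>2)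
   + \<tau>*B * integral {a..c} (\<lambda>x. px a c v x t * px a c w x t)
   + \<tau>*\<delta> * integral {a..c} (\<lambda>x. px a c u x t * px a c w x t)
   + \<alpha>*\<delta> * integral {a..c} (\<lambda>x. px a c u x t * px a c v x t)"

end

theory Submission
  imports Defs
begin

(*
  Pointwise, the integrand of y is a quadratic form in (w_x, v_x, v_xx, u_x, u_xx, u_xxx).
  Its block tau/2 w_x^2 + tau B v_x w_x + alpha B/2 v_x^2 is positive definite because tau B < alpha,
  and the gamma-weighted block b/2 v_xx^2 + u_xx v_xx + B/2 u_xx^2 is positive definite because
  b B > 1.  The remaining terms are nonnegative, except those carrying delta, which are bounded below
  by -delta (tau + alpha)/2 (w_x^2 + v_x^2 + u_x^2).  Since u_x vanishes at the boundary, the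
  Poincare inequality bounds the integral of u_x^2 by |Omega|^2 times that of u_xx^2, so for small
  delta the delta-terms are absorbed, which gives the lower bound.  The upper bound is Young's
  inequality combined with the same Poincare inequality for v_x and u_x.
*)

lemma dwithin_eqI:
  assumes "x islimpt S" and "(g has_real_derivative d) (at x within S)"
  shows "dwithin S g x = d"
  unfolding dwithin_def
proof (rule the_equality)
  show "(g has_real_derivative d) (at x within S)" by (fact assms(2))
  show "d' = d" if "(g has_real_derivative d') (at x within S)" for d'
    using has_field_derivative_unique[OF that assms(2)] assms(1) trivial_limit_within by blast
qed

lemma Cinf_imp_continuous_on:
  assumes "Cinf S g"
  shows "continuous_on S g"
proof -
  obtain Dg where "\<forall>x\<in>S. Dg 0 x = g x"
    and "\<forall>k. \<forall>x\<in>S. (Dg k has_real_derivative Dg (Suc k) x) (at x within S)"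
    using assms unfolding Cinf_def by blast
  then show ?thesis
    using continuous_on_cong DERIV_continuous_on[of S "Dg 0"] by fastforce
qed

lemma Cinf_dwithin_funpow_has_derivative:
  assumes "Cinf S g" and perfect: "\<And>x. x \<in> S \<Longrightarrow> x islimpt S" and "x \<in> S"
  shows "((dwithin S ^^ k) g has_real_derivative (dwithin S ^^ Suc k) g x) (at x within S)"
proof -
  obtain Dg where D0: "\<forall>x\<in>S. Dg 0 x = g x"
    and DS: "\<forall>k. \<forall>x\<in>S. (Dg k has_real_derivative Dg (Suc k) x) (at x within S)"
    using assms(1) unfolding Cinf_def by blast
  have Dg_eq: "\<forall>x\<in>S. (dwithin S ^^ k) g x = Dg k x" for k
  proof (induction k)
    case 0
    then show ?case using D0 by simp
  next
    case (Suc k)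
    show ?case
    proof
      fix x assume x: "x \<in> S"
      have "((dwithin S ^^ k) g has_real_derivative Dg (Suc k) x) (at x within S)"
        by (rule has_field_derivative_transform_within[OF DS[rule_format, OF x] zero_less_one x])
           (use Suc in auto)
      then show "(dwithin S ^^ Suc k) g x = Dg (Suc k) x"
        using dwithin_eqI perfect[OF x] by simp
    qed
  qed
  show ?thesis
    using has_field_derivative_transform_within[OF DS[rule_format, OF \<open>x \<in> S\<close>] zero_less_one]
      Dg_eq \<open>x \<in> S\<close> by metis
qed

lemma px_funpow: "(px a c ^^ k) f x t = (dwithin {a..c} ^^ k) (\<lambda>y. f y t) x"
proof (induction k arbitrary: x)
  case (Suc k)
  then show ?case by (simp add: px_def)
qed simp

lemma px_funpow_has_derivative:
  assumes "a < c" and "Cinf {a..c} (\<lambda>x. f x t)" and "x \<in> {a..c}"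
  shows "((\<lambda>y. (px a c ^^ k) f y t) has_real_derivative (px a c ^^ Suc k) f x t)
           (at x within {a..c})"
  using Cinf_dwithin_funpow_has_derivative[of "{a..c}" "\<lambda>x. f x t", OF assms(2) _ assms(3)] assms(1)
  by (simp add: px_funpow del: funpow.simps)

lemma px_funpow_continuous_on:
  assumes "a < c" and "Cinf {a..c} (\<lambda>x. f x t)"
  shows "continuous_on {a..c} (\<lambda>x. (px a c ^^ k) f x t)"
  by (rule DERIV_continuous_on[OF px_funpow_has_derivative[of a c f t, OF assms]])

lemma square_le_integral_square_derivative:
  fixes f f' :: "real \<Rightarrow> real"
  assumes "a \<le> x" and cont: "continuous_on {a..x} f'"
    and der: "\<And>y. y \<in> {a..x} \<Longrightarrow> (f has_real_derivative f' y) (at y within {a..x})"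
    and "f a = 0"
  shows "(f x)\<^sup>2 \<le> (x - a) * integral {a..x} (\<lambda>y. (f' y)\<^sup>2)"
proof (cases "x = a")
  case True
  then show ?thesis using \<open>f a = 0\<close> by simp
next
  case False
  define d where "d = x - a"
  with False \<open>a \<le> x\<close> have "0 < d" by simp
  define J where "J = integral {a..x} (\<lambda>y. (f' y)\<^sup>2)"
  define s where "s = f x / d"
  have ftc: "(f' has_integral f x) {a..x}"
    using fundamental_theorem_of_calculus[of a x f f'] \<open>a \<le> x\<close> der \<open>f a = 0\<close>
    by (simp add: has_real_derivative_iff_has_vector_derivative)
  have J: "((\<lambda>y. (f' y)\<^sup>2) has_integral J) {a..x}"
    unfolding J_def by (intro integrable_integral integrable_continuous_interval continuous_intros cont)
  \<comment> \<open>Cauchy--Schwarz: the integral of \<open>(f' - s)\<^sup>2\<close> is nonnegative for the mean value \<open>s\<close> of \<open>f'\<close>.\<close>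
  have "((\<lambda>y. (f' y)\<^sup>2 - 2 * s * f' y + s\<^sup>2) has_integral (J - 2 * s * f x + s\<^sup>2 * (x - a))) {a..x}"
    using has_integral_add[OF has_integral_diff[OF J has_integral_mult_right[OF ftc, of "2 * s"]]
        has_integral_const_real[of "s\<^sup>2" a x]] \<open>a \<le> x\<close>
    by (simp add: mult.commute)
  moreover have "0 \<le> (f' y)\<^sup>2 - 2 * s * f' y + s\<^sup>2" for y
    using zero_le_power2[of "f' y - s"] by (simp add: power2_diff algebra_simps)
  ultimately have "0 \<le> J - 2 * s * f x + s\<^sup>2 * d"
    unfolding d_def by (rule has_integral_nonneg)
  also have "\<dots> = J - (f x)\<^sup>2 / d"
    using \<open>0 < d\<close> unfolding s_def by (simp add: field_simps power2_eq_square)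
  finally show ?thesis
    using \<open>0 < d\<close> unfolding J_def d_def by (simp add: field_simps)
qed

lemma poincare_vanishing_left_endpoint:
  fixes f f' :: "real \<Rightarrow> real"
  assumes "a \<le> c" and cont: "continuous_on {a..c} f'"
    and der: "\<And>x. x \<in> {a..c} \<Longrightarrow> (f has_real_derivative f' x) (at x within {a..c})"
    and "f a = 0"
  shows "integral {a..c} (\<lambda>x. (f x)\<^sup>2) \<le> (c - a)\<^sup>2 * integral {a..c} (\<lambda>x. (f' x)\<^sup>2)"
proof -
  define J where "J = integral {a..c} (\<lambda>x. (f' x)\<^sup>2)"
  have "(f x)\<^sup>2 \<le> (c - a) * J" if x: "x \<in> {a..c}" for x
  proof -
    have sub: "{a..x} \<subseteq> {a..c}" using x by auto
    have "(f has_real_derivative f' y) (at y within {a..x})" if "y \<in> {a..x}" for y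
      using DERIV_subset[OF der sub] that sub by blast
    then have "(f x)\<^sup>2 \<le> (x - a) * integral {a..x} (\<lambda>y. (f' y)\<^sup>2)"
      using x \<open>f a = 0\<close> continuous_on_subset[OF cont sub]
      by (intro square_le_integral_square_derivative) auto
    also have "\<dots> \<le> (c - a) * J"
      unfolding J_def using x sub
      by (intro mult_mono integral_subset_le integral_nonneg integrable_continuous_interval
          continuous_intros cont continuous_on_subset[OF cont sub]) auto
    finally show ?thesis .
  qed
  then have "integral {a..c} (\<lambda>x. (f x)\<^sup>2) \<le> integral {a..c} (\<lambda>x. (c - a) * J)"
    using DERIV_continuous_on[OF der]
    by (intro integral_le integrable_continuous_interval continuous_intros) auto
  then show ?thesis
    using \<open>a \<le> c\<close> unfolding J_def by (simp add: power2_eq_square)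
qed

text \<open>Determinant over trace of the matrix \<open>[[p, q], [q, r]]\<close>: a lower bound for its least eigenvalue.\<close>
definition form_coercivity :: "real \<Rightarrow> real \<Rightarrow> real \<Rightarrow> real" where
  "form_coercivity p q r = (p * r - q\<^sup>2) / (p + r)"

lemma form_coercivity_pos: "0 < p \<Longrightarrow> 0 < r \<Longrightarrow> q\<^sup>2 < p * r \<Longrightarrow> 0 < form_coercivity p q r"
  by (simp add: form_coercivity_def)

lemma form_coercivity_nonneg: "0 < p \<Longrightarrow> 0 < r \<Longrightarrow> q\<^sup>2 \<le> p * r \<Longrightarrow> 0 \<le> form_coercivity p q r"
  by (simp add: form_coercivity_def)

lemma form_coercivity_le:
  fixes p q r x y :: real
  assumes "0 < p" and "0 < r" and "q\<^sup>2 \<le> p * r"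
  shows "form_coercivity p q r * (x\<^sup>2 + y\<^sup>2) \<le> p * x\<^sup>2 + 2 * q * x * y + r * y\<^sup>2"
proof -
  define k where "k = form_coercivity p q r"
  have "k * (p + r) = p * r - q\<^sup>2"
    using assms unfolding k_def form_coercivity_def by simp
  then have det: "(p - k) * (r - k) = q\<^sup>2 + k\<^sup>2" and "p - k = (p\<^sup>2 + q\<^sup>2) / (p + r)"
    using assms by (auto simp: field_simps power2_eq_square)
  then have "0 < p - k"
    using assms by (simp add: add_pos_nonneg)
  have "(p - k) * ((p - k) * x\<^sup>2 + 2 * q * x * y + (r - k) * y\<^sup>2)
      = ((p - k) * x + q * y)\<^sup>2 + ((p - k) * (r - k) - q\<^sup>2) * y\<^sup>2"
    by (simp add: algebra_simps power2_eq_square)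
  also have "\<dots> \<ge> 0"
    using det by simp
  finally have "0 \<le> (p - k) * x\<^sup>2 + 2 * q * x * y + (r - k) * y\<^sup>2"
    using \<open>0 < p - k\<close> by (simp add: zero_le_mult_iff)
  then show ?thesis
    unfolding k_def by (simp add: algebra_simps)
qed

definition y_density ::
  "real \<Rightarrow> real \<Rightarrow> real \<Rightarrow> real \<Rightarrow> real \<Rightarrow> real \<Rightarrow> real \<Rightarrow>
   real \<Rightarrow> real \<Rightarrow> real \<Rightarrow> real \<Rightarrow> real \<Rightarrow> real \<Rightarrow> real" where
  "y_density \<tau> \<alpha> b B \<delta> \<epsilon> g wx vx vxx ux uxx uxxx =
     \<tau>/2 * wx\<^sup>2 + b/2 * (g * vxx\<^sup>2) + (B + b*\<delta>)/2 * (g * uxx\<^sup>2) + (\<alpha>*B - \<tau>*\<delta>)/2 * vx\<^sup>2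
   + g * uxx * vxx + \<epsilon> * (g * uxxx\<^sup>2) + (1+\<tau>)*B*\<epsilon>/2 * vxx\<^sup>2
   + \<tau>*B * (vx * wx) + \<tau>*\<delta> * (ux * wx) + \<alpha>*\<delta> * (ux * vx)"

lemma y_density_ge:
  fixes \<tau> \<alpha> b B \<delta> \<epsilon> g gl wx vx vxx ux uxx uxxx :: real
  defines "cA \<equiv> form_coercivity (\<tau>/2) (\<tau>*B/2) (\<alpha>*B/2)"
    and "cB \<equiv> form_coercivity (b/2) (1/2) (B/2)"
  assumes "0 < \<tau>" and "0 < \<alpha>" and "0 < b" and "0 < B" and "\<tau> * B \<le> \<alpha>" and "1 \<le> b * B"
    and "0 \<le> gl" and "gl \<le> g" and "0 \<le> \<delta>" and "0 \<le> \<epsilon>"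
  shows "cA * (wx\<^sup>2 + vx\<^sup>2) + gl * cB * (vxx\<^sup>2 + uxx\<^sup>2) + \<epsilon> * gl * uxxx\<^sup>2
           - \<delta> * ((\<tau> + \<alpha>)/2) * (wx\<^sup>2 + vx\<^sup>2 + ux\<^sup>2)
         \<le> y_density \<tau> \<alpha> b B \<delta> \<epsilon> g wx vx vxx ux uxx uxxx"
proof -
  define formA where "formA = \<tau>/2 * wx\<^sup>2 + 2 * (\<tau>*B/2) * wx * vx + \<alpha>*B/2 * vx\<^sup>2"
  define formB where "formB = b/2 * vxx\<^sup>2 + 2 * (1/2) * vxx * uxx + B/2 * uxx\<^sup>2"
  have "\<tau> * B * (\<tau> * B) \<le> \<tau> * B * \<alpha>"
    using assms by (intro mult_left_mono) auto
  then have A: "cA * (wx\<^sup>2 + vx\<^sup>2) \<le> formA"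
    unfolding cA_def formA_def using assms
    by (intro form_coercivity_le) (auto simp: power2_eq_square algebra_simps)
  have B: "cB * (vxx\<^sup>2 + uxx\<^sup>2) \<le> formB"
    unfolding cB_def formB_def using assms
    by (intro form_coercivity_le) (auto simp: power2_eq_square)
  have "0 \<le> cB"
    unfolding cB_def using assms by (intro form_coercivity_nonneg) (auto simp: power2_eq_square)
  have "y_density \<tau> \<alpha> b B \<delta> \<epsilon> g wx vx vxx ux uxx uxxx
      - (cA * (wx\<^sup>2 + vx\<^sup>2) + gl * cB * (vxx\<^sup>2 + uxx\<^sup>2) + \<epsilon> * gl * uxxx\<^sup>2
           - \<delta> * ((\<tau> + \<alpha>)/2) * (wx\<^sup>2 + vx\<^sup>2 + ux\<^sup>2))
    = (formA - cA * (wx\<^sup>2 + vx\<^sup>2)) + g * (formB - cB * (vxx\<^sup>2 + uxx\<^sup>2))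
      + (g - gl) * cB * (vxx\<^sup>2 + uxx\<^sup>2) + \<epsilon> * (g - gl) * uxxx\<^sup>2 + b*\<delta>/2 * (g * uxx\<^sup>2)
      + (1+\<tau>)*B*\<epsilon>/2 * vxx\<^sup>2 + \<tau>*\<delta>/2 * (ux + wx)\<^sup>2 + \<alpha>*\<delta>/2 * (ux + vx)\<^sup>2 + \<alpha>*\<delta>/2 * wx\<^sup>2"
    unfolding y_density_def formA_def formB_def by (simp add: field_simps power2_eq_square)
  also have "\<dots> \<ge> 0"
    using A B \<open>0 \<le> cB\<close> assms by (intro add_nonneg_nonneg mult_nonneg_nonneg) auto
  finally show ?thesis by simp
qed

lemma y_density_le:
  fixes \<tau> \<alpha> b B \<delta> \<epsilon> g gu wx vx vxx ux uxx uxxx :: real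
  defines "M \<equiv> (1 + \<tau> + \<alpha>) * (1 + B) + (1 + b + B) * gu"
  assumes "0 < \<tau>" and "0 < \<alpha>" and "0 < b" and "0 < B"
    and "0 \<le> g" and "g \<le> gu" and "0 \<le> \<delta>" and "\<delta> \<le> 1" and "0 \<le> \<epsilon>" and "\<epsilon> \<le> 1"
  shows "y_density \<tau> \<alpha> b B \<delta> \<epsilon> g wx vx vxx ux uxx uxxx
         \<le> M * (wx\<^sup>2 + vx\<^sup>2 + vxx\<^sup>2 + ux\<^sup>2 + uxx\<^sup>2 + \<epsilon> * uxxx\<^sup>2)"
proof -
  have "\<delta> * g \<le> gu"
    using assms mult_mono[of \<delta> 1 g gu] by simp
  then have products: "b * \<delta> * g \<le> b * gu" "b * g \<le> b * gu" "B * g \<le> B * gu"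
    "\<tau> * \<delta> \<le> \<tau>" "\<alpha> * \<delta> \<le> \<alpha>" "B * \<epsilon> \<le> B" "\<tau> * B * \<epsilon> \<le> \<tau> * B"
    "0 \<le> \<tau> * B" "0 \<le> \<alpha> * B" "0 \<le> B * gu" "0 \<le> b * gu" "0 \<le> \<tau> * \<delta>" "0 \<le> \<alpha> * \<delta>"
    using assms by (simp_all add: mult_left_le mult.assoc)
  have M_eq: "M = 1 + B + \<tau> + \<tau>*B + \<alpha> + \<alpha>*B + gu + b*gu + B*gu"
    unfolding M_def by (simp add: algebra_simps)
  have coeffs: "0 \<le> M - \<tau>/2 - \<tau>*B/2 - \<tau>*\<delta>/2" "0 \<le> M - \<alpha>*B/2 + \<tau>*\<delta>/2 - \<tau>*B/2 - \<alpha>*\<delta>/2"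
    "0 \<le> M - \<tau>*\<delta>/2 - \<alpha>*\<delta>/2" "0 \<le> M - b*g/2 - g/2 - B*\<epsilon>/2 - \<tau>*B*\<epsilon>/2"
    "0 \<le> M - B*g/2 - b*\<delta>*g/2 - g/2" "0 \<le> M - g"
    by (use products assms M_eq in linarith)+
  have "M * (wx\<^sup>2 + vx\<^sup>2 + vxx\<^sup>2 + ux\<^sup>2 + uxx\<^sup>2 + \<epsilon> * uxxx\<^sup>2)
      - y_density \<tau> \<alpha> b B \<delta> \<epsilon> g wx vx vxx ux uxx uxxx
    = (M - \<tau>/2 - \<tau>*B/2 - \<tau>*\<delta>/2) * wx\<^sup>2 + (M - \<alpha>*B/2 + \<tau>*\<delta>/2 - \<tau>*B/2 - \<alpha>*\<delta>/2) * vx\<^sup>2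
      + (M - \<tau>*\<delta>/2 - \<alpha>*\<delta>/2) * ux\<^sup>2 + (M - b*g/2 - g/2 - B*\<epsilon>/2 - \<tau>*B*\<epsilon>/2) * vxx\<^sup>2
      + (M - B*g/2 - b*\<delta>*g/2 - g/2) * uxx\<^sup>2 + \<epsilon> * (M - g) * uxxx\<^sup>2
      + g/2 * (uxx - vxx)\<^sup>2 + \<tau>*B/2 * (vx - wx)\<^sup>2 + \<tau>*\<delta>/2 * (ux - wx)\<^sup>2 + \<alpha>*\<delta>/2 * (ux - vx)\<^sup>2"
    unfolding y_density_def by (simp add: field_simps power2_eq_square)
  also have "\<dots> \<ge> 0"
    using coeffs assms by (intro add_nonneg_nonneg mult_nonneg_nonneg) auto
  finally show ?thesis by simp
qed

lemma integral_square_nonneg: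
  fixes f :: "'a::euclidean_space \<Rightarrow> real"
  shows "0 \<le> integral S (\<lambda>x. (f x)\<^sup>2)"
  by (cases "(\<lambda>x. (f x)\<^sup>2) integrable_on S") (simp_all add: integral_nonneg not_integrable_integral)

lemma has_integral_integral_continuous:
  fixes f :: "real \<Rightarrow> real"
  shows "continuous_on {a..c} f \<Longrightarrow> (f has_integral integral {a..c} f) {a..c}"
  by (intro integrable_integral integrable_continuous_interval)

lemma absorb_lower_order_terms:
  fixes Iw Iv Ivv Iu Iuu Iuuu cA cB gl d P \<epsilon> :: real
  assumes "0 \<le> Iw" and "0 \<le> Iv" and "0 \<le> Ivv" and "0 \<le> Iuu" and "0 \<le> Iuuu"
    and "0 \<le> cA" and "0 \<le> cB" and "0 \<le> gl" and "0 \<le> \<epsilon>" and "0 \<le> d"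
    and "Iu \<le> P * Iuu" and "d \<le> cA/2" and "d * P \<le> gl * cB/2"
  shows "min (cA/2) (min (gl * cB/2) gl) * (Iw + Ivv + Iuu + \<epsilon> * Iuuu)
    \<le> cA * (Iw + Iv) + gl * cB * (Ivv + Iuu) + \<epsilon> * gl * Iuuu - d * (Iw + Iv + Iu)"
proof -
  define k where "k = min (cA/2) (min (gl * cB/2) gl)"
  have "d * Iu \<le> d * P * Iuu"
    using mult_left_mono[OF \<open>Iu \<le> P * Iuu\<close> \<open>0 \<le> d\<close>] by (simp add: mult.assoc)
  also have "\<dots> \<le> gl * cB / 2 * Iuu"
    using mult_right_mono[OF \<open>d * P \<le> gl * cB/2\<close> \<open>0 \<le> Iuu\<close>] .
  finally have "d * Iu \<le> gl * cB * Iuu / 2"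
    by simp
  moreover have "d * Iw \<le> cA * Iw / 2" "d * Iv \<le> cA * Iv / 2"
    using mult_right_mono[OF \<open>d \<le> cA/2\<close>] assms by auto
  moreover have "k \<le> cA/2" "k \<le> gl * cB/2" "k \<le> gl"
    unfolding k_def by auto
  then have "k * Iw \<le> cA * Iw / 2" "k * Ivv \<le> gl * cB * Ivv / 2"
    "k * Iuu \<le> gl * cB * Iuu / 2" "k * (\<epsilon> * Iuuu) \<le> \<epsilon> * gl * Iuuu"
    using mult_right_mono[OF _ \<open>0 \<le> Iw\<close>, of k "cA/2"] mult_right_mono[OF _ \<open>0 \<le> Ivv\<close>, of k "gl * cB/2"]
      mult_right_mono[OF _ \<open>0 \<le> Iuu\<close>, of k "gl * cB/2"]
      mult_right_mono[OF _ mult_nonneg_nonneg[OF \<open>0 \<le> \<epsilon>\<close> \<open>0 \<le> Iuuu\<close>], of k gl]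
    by (simp_all add: mult_ac)
  moreover have "0 \<le> cA * Iv" "0 \<le> gl * cB * Ivv"
    using assms by auto
  ultimately show ?thesis
    unfolding k_def[symmetric] distrib_left right_diff_distrib by linarith
qed

lemma integral_y_density_ge:
  fixes a c \<tau> \<alpha> b B \<delta> \<epsilon> gl :: real and G Wx Vx Vxx Ux Uxx Uxxx :: "real \<Rightarrow> real"
  defines "cA \<equiv> form_coercivity (\<tau>/2) (\<tau>*B/2) (\<alpha>*B/2)"
    and "cB \<equiv> form_coercivity (b/2) (1/2) (B/2)"
    and "I \<equiv> \<lambda>f. integral {a..c} (\<lambda>x. (f x)\<^sup>2)"
  assumes "a \<le> c"
    and cont: "continuous_on {a..c} G" "continuous_on {a..c} Wx" "continuous_on {a..c} Vxx"
      "continuous_on {a..c} Uxx" "continuous_on {a..c} Uxxx"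
    and dV: "\<And>x. x \<in> {a..c} \<Longrightarrow> (Vx has_real_derivative Vxx x) (at x within {a..c})"
    and dU: "\<And>x. x \<in> {a..c} \<Longrightarrow> (Ux has_real_derivative Uxx x) (at x within {a..c})"
    and "Ux a = 0"
    and G: "\<And>x. x \<in> {a..c} \<Longrightarrow> gl \<le> G x"
    and "0 < \<tau>" and "0 < \<alpha>" and "0 < b" and "0 < B" and "\<tau> * B \<le> \<alpha>" and "1 \<le> b * B"
    and "0 \<le> gl" and "0 \<le> \<delta>" and "0 \<le> \<epsilon>"
    and \<delta>A: "\<delta> * (\<tau> + \<alpha>) \<le> cA" and \<delta>B: "\<delta> * (\<tau> + \<alpha>) * (c - a)\<^sup>2 \<le> gl * cB"
  shows "min (cA/2) (min (gl * cB/2) gl) * (I Wx + I Vxx + I Uxx + \<epsilon> * I Uxxx)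
    \<le> integral {a..c} (\<lambda>x. y_density \<tau> \<alpha> b B \<delta> \<epsilon> (G x) (Wx x) (Vx x) (Vxx x) (Ux x) (Uxx x) (Uxxx x))"
proof -
  define d where "d = \<delta> * ((\<tau> + \<alpha>)/2)"
  define P where "P = (c - a)\<^sup>2"
  have contV: "continuous_on {a..c} Vx" and contU: "continuous_on {a..c} Ux"
    using DERIV_continuous_on dV dU by blast+
  note integrals = has_integral_integral_continuous continuous_intros cont contV contU
  have "I Ux \<le> P * I Uxx"
    unfolding I_def P_def using \<open>a \<le> c\<close> cont \<open>Ux a = 0\<close> dU
    by (auto intro: poincare_vanishing_left_endpoint)
  moreover have "d \<le> cA/2" and "d * P \<le> gl * cB/2"
    using \<delta>A \<delta>B unfolding d_def P_def by simp_all
  moreover have "0 \<le> cA" and "0 \<le> cB"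
    unfolding cA_def cB_def using assms mult_left_mono[OF \<open>\<tau> * B \<le> \<alpha>\<close>, of "\<tau> * B"]
    by (auto intro!: form_coercivity_nonneg simp: power2_eq_square algebra_simps)
  ultimately have "min (cA/2) (min (gl * cB/2) gl) * (I Wx + I Vxx + I Uxx + \<epsilon> * I Uxxx)
      \<le> cA * (I Wx + I Vx) + gl * cB * (I Vxx + I Uxx) + \<epsilon> * gl * I Uxxx - d * (I Wx + I Vx + I Ux)"
    using assms unfolding I_def d_def
    by (intro absorb_lower_order_terms) (simp_all add: integral_square_nonneg)
  also have "\<dots> \<le> integral {a..c} (\<lambda>x. y_density \<tau> \<alpha> b B \<delta> \<epsilon> (G x) (Wx x) (Vx x) (Vxx x) (Ux x) (Uxx x) (Uxxx x))"
  proof (rule has_integral_le)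
    show "((\<lambda>x. cA * ((Wx x)\<^sup>2 + (Vx x)\<^sup>2) + gl * cB * ((Vxx x)\<^sup>2 + (Uxx x)\<^sup>2) + \<epsilon> * gl * (Uxxx x)\<^sup>2
        - d * ((Wx x)\<^sup>2 + (Vx x)\<^sup>2 + (Ux x)\<^sup>2))
      has_integral (cA * (I Wx + I Vx) + gl * cB * (I Vxx + I Uxx) + \<epsilon> * gl * I Uxxx
        - d * (I Wx + I Vx + I Ux))) {a..c}"
      unfolding I_def by (intro has_integral_add has_integral_diff has_integral_mult_right integrals)
    show "((\<lambda>x. y_density \<tau> \<alpha> b B \<delta> \<epsilon> (G x) (Wx x) (Vx x) (Vxx x) (Ux x) (Uxx x) (Uxxx x))
      has_integral integral {a..c} (\<lambda>x. y_density \<tau> \<alpha> b B \<delta> \<epsilon> (G x) (Wx x) (Vx x) (Vxx x) (Ux x) (Uxx x) (Uxxx x))) {a..c}"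
      unfolding y_density_def by (intro integrals)
  qed (unfold cA_def cB_def d_def, intro y_density_ge G, use assms in auto)
  finally show ?thesis .
qed

lemma integral_y_density_le:
  fixes a c \<tau> \<alpha> b B \<delta> \<epsilon> gu :: real and G Wx Vx Vxx Ux Uxx Uxxx :: "real \<Rightarrow> real"
  defines "M \<equiv> (1 + \<tau> + \<alpha>) * (1 + B) + (1 + b + B) * gu"
    and "I \<equiv> \<lambda>f. integral {a..c} (\<lambda>x. (f x)\<^sup>2)"
  assumes "a \<le> c"
    and cont: "continuous_on {a..c} G" "continuous_on {a..c} Wx" "continuous_on {a..c} Vxx"
      "continuous_on {a..c} Uxx" "continuous_on {a..c} Uxxx"
    and dV: "\<And>x. x \<in> {a..c} \<Longrightarrow> (Vx has_real_derivative Vxx x) (at x within {a..c})"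
    and dU: "\<And>x. x \<in> {a..c} \<Longrightarrow> (Ux has_real_derivative Uxx x) (at x within {a..c})"
    and "Vx a = 0" and "Ux a = 0"
    and G: "\<And>x. x \<in> {a..c} \<Longrightarrow> 0 \<le> G x \<and> G x \<le> gu"
    and "0 < \<tau>" and "0 < \<alpha>" and "0 < b" and "0 < B"
    and "0 \<le> \<delta>" and "\<delta> \<le> 1" and "0 \<le> \<epsilon>" and "\<epsilon> \<le> 1"
  shows "integral {a..c} (\<lambda>x. y_density \<tau> \<alpha> b B \<delta> \<epsilon> (G x) (Wx x) (Vx x) (Vxx x) (Ux x) (Uxx x) (Uxxx x))
    \<le> M * (1 + (c - a)\<^sup>2) * (I Wx + I Vxx + I Uxx + \<epsilon> * I Uxxx)"
proof -
  define P where "P = (c - a)\<^sup>2"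
  have contV: "continuous_on {a..c} Vx" and contU: "continuous_on {a..c} Ux"
    using DERIV_continuous_on dV dU by blast+
  note integrals = has_integral_integral_continuous continuous_intros cont contV contU
  have nonneg: "0 \<le> I Wx" "0 \<le> I Uxxx" "0 \<le> P"
    unfolding I_def P_def by (simp_all add: integral_square_nonneg)
  have PV: "I Vx \<le> P * I Vxx" and PU: "I Ux \<le> P * I Uxx"
    unfolding I_def P_def using \<open>a \<le> c\<close> cont \<open>Vx a = 0\<close> \<open>Ux a = 0\<close> dV dU
    by (auto intro: poincare_vanishing_left_endpoint)
  have "0 \<le> gu"
    using G[of a] \<open>a \<le> c\<close> by auto
  then have "0 \<le> M"
    unfolding M_def using assms by auto
  have "((\<lambda>x. y_density \<tau> \<alpha> b B \<delta> \<epsilon> (G x) (Wx x) (Vx x) (Vxx x) (Ux x) (Uxx x) (Uxxx x))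
      has_integral integral {a..c} (\<lambda>x. y_density \<tau> \<alpha> b B \<delta> \<epsilon> (G x) (Wx x) (Vx x) (Vxx x) (Ux x) (Uxx x) (Uxxx x))) {a..c}"
    unfolding y_density_def by (intro integrals)
  moreover have "((\<lambda>x. M * ((Wx x)\<^sup>2 + (Vx x)\<^sup>2 + (Vxx x)\<^sup>2 + (Ux x)\<^sup>2 + (Uxx x)\<^sup>2 + \<epsilon> * (Uxxx x)\<^sup>2))
      has_integral M * (I Wx + I Vx + I Vxx + I Ux + I Uxx + \<epsilon> * I Uxxx)) {a..c}"
    unfolding I_def by (intro has_integral_add has_integral_mult_right integrals)
  ultimately have "integral {a..c} (\<lambda>x. y_density \<tau> \<alpha> b B \<delta> \<epsilon> (G x) (Wx x) (Vx x) (Vxx x) (Ux x) (Uxx x) (Uxxx x))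
      \<le> M * (I Wx + I Vx + I Vxx + I Ux + I Uxx + \<epsilon> * I Uxxx)"
    by (rule has_integral_le) (unfold M_def, intro y_density_le, use assms G in auto)
  also have "\<dots> \<le> M * ((1 + P) * (I Wx + I Vxx + I Uxx + \<epsilon> * I Uxxx))"
  proof (rule mult_left_mono[OF _ \<open>0 \<le> M\<close>])
    have "0 \<le> P * I Wx" "0 \<le> P * (\<epsilon> * I Uxxx)"
      using nonneg \<open>0 \<le> \<epsilon>\<close> by auto
    moreover have "(1 + P) * (I Wx + I Vxx + I Uxx + \<epsilon> * I Uxxx)
        = I Wx + I Vxx + I Uxx + \<epsilon> * I Uxxx + P * I Wx + P * I Vxx + P * I Uxx + P * (\<epsilon> * I Uxxx)"
      by (simp add: algebra_simps)
    ultimately show "I Wx + I Vx + I Vxx + I Ux + I Uxx + \<epsilon> * I Uxxx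
        \<le> (1 + P) * (I Wx + I Vxx + I Uxx + \<epsilon> * I Uxxx)"
      using PV PU by linarith
  qed
  finally show ?thesis
    unfolding P_def by (simp add: mult.assoc)
qed

lemma yfun_eq_integral_y_density:
  assumes "continuous_on {a..c} (\<lambda>x. \<gamma> (\<Theta> x t))"
    and "continuous_on {a..c} (\<lambda>x. px a c w x t)"
    and "continuous_on {a..c} (\<lambda>x. px a c v x t)" and "continuous_on {a..c} (\<lambda>x. px a c (px a c v) x t)"
    and "continuous_on {a..c} (\<lambda>x. px a c u x t)" and "continuous_on {a..c} (\<lambda>x. px a c (px a c u) x t)"
    and "continuous_on {a..c} (\<lambda>x. px a c (px a c (px a c u)) x t)"
  shows "yfun a c \<tau> \<alpha> b B \<delta> \<epsilon> \<gamma> w v u \<Theta> t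
    = integral {a..c} (\<lambda>x. y_density \<tau> \<alpha> b B \<delta> \<epsilon> (\<gamma> (\<Theta> x t)) (px a c w x t)
        (px a c v x t) (px a c (px a c v) x t) (px a c u x t) (px a c (px a c u) x t)
        (px a c (px a c (px a c u)) x t))"
proof -
  have "((\<lambda>x. y_density \<tau> \<alpha> b B \<delta> \<epsilon> (\<gamma> (\<Theta> x t)) (px a c w x t)
        (px a c v x t) (px a c (px a c v) x t) (px a c u x t) (px a c (px a c u) x t)
        (px a c (px a c (px a c u)) x t)) has_integral yfun a c \<tau> \<alpha> b B \<delta> \<epsilon> \<gamma> w v u \<Theta> t) {a..c}"
    unfolding yfun_def y_density_def
    by (intro has_integral_add has_integral_mult_right has_integral_integral_continuous
        continuous_intros assms)
  then show ?thesis
    by (rule integral_unique[symmetric])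
qed

lemma bounds_on_Icc_from_Ioo:
  fixes f :: "real \<Rightarrow> real"
  assumes "a < c" and "continuous_on {a..c} f" and "\<And>x. x \<in> {a<..<c} \<Longrightarrow> l \<le> f x \<and> f x \<le> h"
    and "x \<in> {a..c}"
  shows "l \<le> f x \<and> f x \<le> h"
proof -
  have cl: "closure {a<..<c} = {a..c}"
    using \<open>a < c\<close> by simp
  show ?thesis
    using continuous_ge_on_closure[of "{a<..<c}" f x l] continuous_le_on_closure[of "{a<..<c}" f x h]
    unfolding cl using assms by blast
qed

lemma is_solution_slice_regular:
  assumes "a < c" and sol: "is_solution a c D \<tau> \<alpha> b \<epsilon> \<gamma> w0 v0 u0 \<Theta>0 Tm w v u \<Theta>"
    and "Cinf {0..} \<gamma>" and "0 < t" and "ereal t < Tm"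
  shows "continuous_on {a..c} (\<lambda>x. \<gamma> (\<Theta> x t))"
    and "continuous_on {a..c} (\<lambda>x. px a c w x t)"
    and "continuous_on {a..c} (\<lambda>x. px a c v x t)" and "continuous_on {a..c} (\<lambda>x. px a c (px a c v) x t)"
    and "continuous_on {a..c} (\<lambda>x. px a c u x t)" and "continuous_on {a..c} (\<lambda>x. px a c (px a c u) x t)"
    and "continuous_on {a..c} (\<lambda>x. px a c (px a c (px a c u)) x t)"
    and "\<And>x. x \<in> {a..c} \<Longrightarrow>
      ((\<lambda>y. px a c v y t) has_real_derivative px a c (px a c v) x t) (at x within {a..c})"
    and "\<And>x. x \<in> {a..c} \<Longrightarrow>
      ((\<lambda>y. px a c u y t) has_real_derivative px a c (px a c u) x t) (at x within {a..c})"
    and "px a c v a t = 0" and "px a c u a t = 0"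
proof -
  have Cinf: "Cinf {a..c} (\<lambda>x. w x t)" "Cinf {a..c} (\<lambda>x. v x t)" "Cinf {a..c} (\<lambda>x. u x t)"
    "Cinf {a..c} (\<lambda>x. \<Theta> x t)"
    using sol \<open>0 < t\<close> \<open>ereal t < Tm\<close> unfolding is_solution_def sol_reg_def by auto
  have px_cont: "continuous_on {a..c} (\<lambda>x. (px a c ^^ k) f x t)"
    and px_deriv: "x \<in> {a..c} \<Longrightarrow>
      ((\<lambda>y. (px a c ^^ k) f y t) has_real_derivative (px a c ^^ Suc k) f x t) (at x within {a..c})"
    if "Cinf {a..c} (\<lambda>x. f x t)" for f k x
    using px_funpow_continuous_on[of a c f t] px_funpow_has_derivative[of a c f t] \<open>a < c\<close> that
    by blast+
  show "continuous_on {a..c} (\<lambda>x. \<gamma> (\<Theta> x t))"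
    using sol \<open>0 < t\<close> \<open>ereal t < Tm\<close> unfolding is_solution_def
    by (intro continuous_on_compose2[OF Cinf_imp_continuous_on[OF \<open>Cinf {0..} \<gamma>\<close>]
        Cinf_imp_continuous_on[OF Cinf(4)]]) auto
  show "continuous_on {a..c} (\<lambda>x. px a c w x t)"
    "continuous_on {a..c} (\<lambda>x. px a c v x t)" "continuous_on {a..c} (\<lambda>x. px a c (px a c v) x t)"
    "continuous_on {a..c} (\<lambda>x. px a c u x t)" "continuous_on {a..c} (\<lambda>x. px a c (px a c u) x t)"
    "continuous_on {a..c} (\<lambda>x. px a c (px a c (px a c u)) x t)"
    using px_cont[of w "Suc 0", OF Cinf(1)]
      px_cont[of v "Suc 0", OF Cinf(2)] px_cont[of v "Suc (Suc 0)", OF Cinf(2)]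
      px_cont[of u "Suc 0", OF Cinf(3)] px_cont[of u "Suc (Suc 0)", OF Cinf(3)]
      px_cont[of u "Suc (Suc (Suc 0))", OF Cinf(3)]
    by simp_all
  show "((\<lambda>y. px a c v y t) has_real_derivative px a c (px a c v) x t) (at x within {a..c})"
    "((\<lambda>y. px a c u y t) has_real_derivative px a c (px a c u) x t) (at x within {a..c})"
    if "x \<in> {a..c}" for x
    using px_deriv[where f = v and k = "Suc 0", OF Cinf(2) that]
      px_deriv[where f = u and k = "Suc 0", OF Cinf(3) that]
    by simp_all
  show "px a c v a t = 0" "px a c u a t = 0"
    using sol \<open>0 < t\<close> \<open>ereal t < Tm\<close> unfolding is_solution_def by auto
qed

lemma yfun_bounds:
  fixes a c \<tau> \<alpha> b B \<delta> \<epsilon> gl gu t :: real and \<gamma> :: "real \<Rightarrow> real"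
    and w v u \<Theta> :: "real \<Rightarrow> real \<Rightarrow> real"
  defines "cA \<equiv> form_coercivity (\<tau>/2) (\<tau>*B/2) (\<alpha>*B/2)"
    and "cB \<equiv> form_coercivity (b/2) (1/2) (B/2)"
    and "M \<equiv> (1 + \<tau> + \<alpha>) * (1 + B) + (1 + b + B) * gu"
    and "N \<equiv> integral {a..c} (\<lambda>x. (px a c w x t)\<^sup>2) + integral {a..c} (\<lambda>x. (px a c (px a c v) x t)\<^sup>2)
      + integral {a..c} (\<lambda>x. (px a c (px a c u) x t)\<^sup>2)
      + \<epsilon> * integral {a..c} (\<lambda>x. (px a c (px a c (px a c u)) x t)\<^sup>2)"
  assumes "a < c" and sol: "is_solution a c D \<tau> \<alpha> b \<epsilon> \<gamma> w0 v0 u0 \<Theta>0 Tm w v u \<Theta>"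
    and "Cinf {0..} \<gamma>" and "0 < t" and "ereal t < Tm"
    and \<gamma>_bounds: "\<forall>x\<in>{a<..<c}. gl \<le> \<gamma> (\<Theta> x t) \<and> \<gamma> (\<Theta> x t) \<le> gu"
    and "0 < \<tau>" and "0 < \<alpha>" and "0 < b" and "0 < B" and "\<tau> * B \<le> \<alpha>" and "1 \<le> b * B"
    and "0 \<le> gl" and "0 \<le> \<delta>" and "\<delta> \<le> 1" and "0 \<le> \<epsilon>" and "\<epsilon> \<le> 1"
    and "\<delta> * (\<tau> + \<alpha>) \<le> cA" and "\<delta> * (\<tau> + \<alpha>) * (c - a)\<^sup>2 \<le> gl * cB"
  shows "min (cA/2) (min (gl * cB/2) gl) * N \<le> yfun a c \<tau> \<alpha> b B \<delta> \<epsilon> \<gamma> w v u \<Theta> t"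
    and "yfun a c \<tau> \<alpha> b B \<delta> \<epsilon> \<gamma> w v u \<Theta> t \<le> M * (1 + (c - a)\<^sup>2) * N"
proof -
  note regular = is_solution_slice_regular[OF \<open>a < c\<close> sol \<open>Cinf {0..} \<gamma>\<close> \<open>0 < t\<close> \<open>ereal t < Tm\<close>]
  have \<gamma>_bounds_Icc: "gl \<le> \<gamma> (\<Theta> x t) \<and> \<gamma> (\<Theta> x t) \<le> gu" if "x \<in> {a..c}" for x
    using bounds_on_Icc_from_Ioo[OF \<open>a < c\<close> regular(1)] \<gamma>_bounds that by blast
  note yfun_eq = yfun_eq_integral_y_density[where \<gamma> = \<gamma> and \<Theta> = \<Theta>, OF regular(1-7)]
  show "min (cA/2) (min (gl * cB/2) gl) * N \<le> yfun a c \<tau> \<alpha> b B \<delta> \<epsilon> \<gamma> w v u \<Theta> t"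
    unfolding yfun_eq N_def cA_def cB_def
    by (rule integral_y_density_ge) (use assms regular \<gamma>_bounds_Icc in auto)
  show "yfun a c \<tau> \<alpha> b B \<delta> \<epsilon> \<gamma> w v u \<Theta> t \<le> M * (1 + (c - a)\<^sup>2) * N"
    unfolding yfun_eq N_def M_def
    using \<gamma>_bounds_Icc \<open>0 \<le> gl\<close>
    by (intro integral_y_density_le) (use assms regular in force)+
qed

theorem lemma4p2:
  fixes a c \<tau> \<alpha> b B gl gu :: real
  assumes "a < c" and "\<tau> > 0" and "\<alpha> > 0" and "b > 0" and "\<alpha> * b > \<tau>"
    and "1/b < B" and "B < \<alpha>/\<tau>" and "0 < gl" and "gl < gu"
  shows "\<exists>\<delta>1>0. \<exists>k1>0. \<exists>k2>0.
    \<forall>\<delta> D \<epsilon> \<gamma> w0 v0 u0 \<Theta>0 Tm T w v u \<Theta>.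
      0 < \<delta> \<and> \<delta> \<le> \<delta>1 \<and> D > 0 \<and> 0 < \<epsilon> \<and> \<epsilon> < 1 \<and>
      Cinf {0..} \<gamma> \<and> (\<forall>s\<ge>0. \<gamma> s \<ge> 0) \<and>
      init_ok a c w0 \<and> init_ok a c v0 \<and> init_ok a c u0 \<and> init_ok a c \<Theta>0 \<and>
      integral {a..c} w0 = 0 \<and> integral {a..c} v0 = 0 \<and> integral {a..c} u0 = 0 \<and>
      (\<forall>x\<in>{a..c}. \<Theta>0 x \<ge> 0) \<and>
      is_solution a c D \<tau> \<alpha> b \<epsilon> \<gamma> w0 v0 u0 \<Theta>0 Tm w v u \<Theta> \<and>
      0 < T \<and> ereal T < Tm \<and>
      (\<forall>x\<in>{a<..<c}. \<forall>t\<in>{0<..<T}. gl \<le> \<gamma> (\<Theta> x t) \<and> \<gamma> (\<Theta> x t) \<le> gu)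
      \<longrightarrow> (\<forall>t\<in>{0<..<T}.
        k1 * (integral {a..c} (\<lambda>x. (px a c w x t)\<^sup>2)
              + integral {a..c} (\<lambda>x. (px a c (px a c v) x t)\<^sup>2)
              + integral {a..c} (\<lambda>x. (px a c (px a c u) x t)\<^sup>2)
              + \<epsilon> * integral {a..c} (\<lambda>x. (px a c (px a c (px a c u)) x t)\<^sup>2))
          \<le> yfun a c \<tau> \<alpha> b B \<delta> \<epsilon> \<gamma> w v u \<Theta> t \<and>
        yfun a c \<tau> \<alpha> b B \<delta> \<epsilon> \<gamma> w v u \<Theta> t
          \<le> k2 * (integral {a..c} (\<lambda>x. (px a c w x t)\<^sup>2)
              + integral {a..c} (\<lambda>x. (px a c (px a c v) x t)\<^sup>2)
              + integral {a..c} (\<lambda>x. (px a c (px a c u) x t)\<^sup>2)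
              + \<epsilon> * integral {a..c} (\<lambda>x. (px a c (px a c (px a c u)) x t)\<^sup>2)))"
proof -
  define cA where "cA = form_coercivity (\<tau>/2) (\<tau>*B/2) (\<alpha>*B/2)"
  define cB where "cB = form_coercivity (b/2) (1/2) (B/2)"
  define M where "M = (1 + \<tau> + \<alpha>) * (1 + B) + (1 + b + B) * gu"
  define \<delta>1 where "\<delta>1 = min 1 (min (cA / (\<tau> + \<alpha>)) (gl * cB / ((\<tau> + \<alpha>) * (c - a)\<^sup>2)))"
  define k1 where "k1 = min (cA/2) (min (gl * cB/2) gl)"
  define k2 where "k2 = M * (1 + (c - a)\<^sup>2)"
  have "0 < B" "\<tau> * B < \<alpha>" "1 < b * B"
    using assms by (auto simp: field_simps less_trans[of 0 "1/b" B])
  then have "0 < cA" "0 < cB"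
    unfolding cA_def cB_def using assms
    by (auto intro!: form_coercivity_pos simp: power2_eq_square)
  then have "0 < \<delta>1" "0 < k1"
    unfolding \<delta>1_def k1_def using assms by auto
  have "0 < M"
    unfolding M_def using assms \<open>0 < B\<close> by (intro add_pos_nonneg) auto
  then have "0 < k2"
    unfolding k2_def by (simp add: add_pos_nonneg)
  have "0 < \<tau> + \<alpha>" "0 < (\<tau> + \<alpha>) * (c - a)\<^sup>2"
    using assms by auto
  then have \<delta>_small: "\<delta> \<le> 1" "\<delta> * (\<tau> + \<alpha>) \<le> cA" "\<delta> * (\<tau> + \<alpha>) * (c - a)\<^sup>2 \<le> gl * cB"
    if "\<delta> \<le> \<delta>1" for \<delta>
    using that unfolding \<delta>1_def by (auto simp: pos_le_divide_eq mult.assoc)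
  show ?thesis
  proof (rule exI[of _ \<delta>1], intro conjI \<open>0 < \<delta>1\<close>, rule exI[of _ k1], intro conjI \<open>0 < k1\<close>,
      rule exI[of _ k2], rule conjI[OF \<open>0 < k2\<close>], intro allI impI ballI, goal_cases)
    case (1 \<delta> D \<epsilon> \<gamma> w0 v0 u0 \<Theta>0 Tm T w v u \<Theta> t)
    then have "ereal t < Tm"
      using less_trans[of "ereal t" "ereal T" Tm] by auto
    moreover have "\<forall>x\<in>{a<..<c}. gl \<le> \<gamma> (\<Theta> x t) \<and> \<gamma> (\<Theta> x t) \<le> gu"
      using 1 by auto
    ultimately show ?case
      unfolding k1_def k2_def M_def cA_def cB_def
      using 1 \<delta>_small[unfolded cA_def cB_def] \<open>0 < B\<close> \<open>\<tau> * B < \<alpha>\<close> \<open>1 < b * B\<close> assms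
      by (intro conjI yfun_bounds[where gl = gl and gu = gu]) auto
  qed
qed

end
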